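(* Let $N\ge1$, $B>0$, $a_{\max}>0$, and for each $n$ let $a_n\ge0$, $\zeta_n\in(0,1]$, $\beta_n\ge0$, integers $\tau_n\ge1$, $D_n\ge1$, and $0\le q_n<p_n\le1$ with $q_n\le a_n/a_{\max}\le p_n$. Put $\tilde a_n=\frac{a_n-a_{\max}q_n}{p_n-q_n}$. For $\lambda\ge0$ and $n$ with $\zeta_n\beta_n>\lambda$, let $c_n(\lambda)=\frac{\lambda}{(\zeta_n\beta_n-\lambda)(1-\zeta_n)^{\tau_n}+\lambda}$ and $$v_n(\lambda)=\begin{cases} p_n\frac{1-(1-\zeta_n)^{\tau_n}}{\zeta_n}(\zeta_n\beta_n-\lambda), & p_n\le c_n(\lambda),\\[2pt] -(1-p_n)\frac{1-(1-\zeta_n)^{D_n}}{\zeta_n}\lambda+p_n\frac{1-(1-\zeta_n)^{\tau_n+D_n}}{\zeta_n}(\zeta_n\beta_n-\lambda), & p_n>c_n(\lambda).\end{cases}$$ Define $$g_I(\lambda)=\lambda B+\sum_{n:\ \zeta_n\beta_n>\lambda}\Big[\tilde a_n v_n(\lambda)+(a_{\max}-\tilde a_n)q_n\frac{1-(1-\zeta_n)^{\tau_n}}{\zeta_n}(\zeta_n\beta_n-\lambda)\Big],$$ $$g_0(\lambda)=\lambda B+\sum_{n:\ \zeta_n\beta_n>\lambda}a_n\frac{1-(1-\zeta_n)^{\tau_n}}{\zeta_n}(\zeta_n\beta_n-\lambda).$$ Let $\phi_I^*=\min_{\lambda\ge0}g_I(\lambda)$, $\phi_0^*=\min_{\lambda\ge0}g_0(\lambda)$,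 $\lambda_0^*$ a minimizer of $g_0$, and $\lambda_I^*$ a minimizer of $g_I$ over $\lambda\ge0$. Then $$\phi_I^*-\phi_0^*\le\sum_{n:\ \zeta_n\beta_n>\lambda_0^*}\Big\{\tilde a_n v_n(\lambda_0^* )-\frac{(a_np_n-a_{\max}p_nq_n)[1-(1-\zeta_n)^{\tau_n}]}{(p_n-q_n)\zeta_n}(\zeta_n\beta_n-\lambda_0^* )\Big\}$$ and $$\phi_I^*-\phi_0^*\ge\sum_{n:\ \zeta_n\beta_n>\lambda_I^*}\Big\{\tilde a_n v_n(\lambda_I^* )-\frac{(a_np_n-a_{\max}p_nq_n)[1-(1-\zeta_n)^{\tau_n}]}{(p_n-q_n)\zeta_n}(\zeta_n\beta_n-\lambda_I^* )\Big\}.$$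
   Context: Static channels, binary resource levels. $a_n$ is the arrival rate of user $n$, $a_{\max}$ the maximal number of possible arrivals per slot, $p_n$ the true-positive rate and $q_n$ the false-negative rate of prediction, $\tilde a_n$ the rate of predicted arrivals, $\zeta_n$ the success probability, $\beta_n$ the weight, $\tau_n$ the deadline, $D_n$ the prediction window, $B$ the resource budget. $g_I$ and $g_0$ are the Lagrange dual functions with imperfect prediction and with no prediction; $\phi_I^*,\phi_0^*$ the corresponding optimal weighted timely-throughputs. *)

theory Defs
  imports "HOL-Analysis.Analysis"
begin

definition atil :: "real \<Rightarrow> real \<Rightarrow> real \<Rightarrow> real \<Rightarrow> real" where
  "atil amax a p q = (a - amax * q) / (p - q)"

definition cfun :: "real \<Rightarrow> real \<Rightarrow> nat \<Rightarrow> real \<Rightarrow> real" where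
  "cfun \<zeta> \<beta> \<tau> l = l / ((\<zeta> * \<beta> - l) * (1 - \<zeta>) ^ \<tau> + l)"

definition vfun :: "real \<Rightarrow> real \<Rightarrow> real \<Rightarrow> nat \<Rightarrow> nat \<Rightarrow> real \<Rightarrow> real" where
  "vfun p \<zeta> \<beta> \<tau> D l =
     (if p \<le> cfun \<zeta> \<beta> \<tau> l
      then p * ((1 - (1 - \<zeta>) ^ \<tau>) / \<zeta>) * (\<zeta> * \<beta> - l)
      else - (1 - p) * ((1 - (1 - \<zeta>) ^ D) / \<zeta>) * l
           + p * ((1 - (1 - \<zeta>) ^ (\<tau> + D)) / \<zeta>) * (\<zeta> * \<beta> - l))"

definition gI :: "nat \<Rightarrow> real \<Rightarrow> real \<Rightarrow> (nat \<Rightarrow> real) \<Rightarrow> (nat \<Rightarrow> real) \<Rightarrow> (nat \<Rightarrow> real)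
   \<Rightarrow> (nat \<Rightarrow> real) \<Rightarrow> (nat \<Rightarrow> real) \<Rightarrow> (nat \<Rightarrow> nat) \<Rightarrow> (nat \<Rightarrow> nat) \<Rightarrow> real \<Rightarrow> real" where
  "gI N B amax a p q \<zeta> \<beta> \<tau> D l = l * B +
     (\<Sum>n\<in>{n. n < N \<and> \<zeta> n * \<beta> n > l}.
        atil amax (a n) (p n) (q n) * vfun (p n) (\<zeta> n) (\<beta> n) (\<tau> n) (D n) l
        + (amax - atil amax (a n) (p n) (q n)) * q n * ((1 - (1 - \<zeta> n) ^ \<tau> n) / \<zeta> n)
            * (\<zeta> n * \<beta> n - l))"

definition g0 :: "nat \<Rightarrow> real \<Rightarrow> (nat \<Rightarrow> real) \<Rightarrow> (nat \<Rightarrow> real) \<Rightarrow> (nat \<Rightarrow> real)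
   \<Rightarrow> (nat \<Rightarrow> nat) \<Rightarrow> real \<Rightarrow> real" where
  "g0 N B a \<zeta> \<beta> \<tau> l = l * B +
     (\<Sum>n\<in>{n. n < N \<and> \<zeta> n * \<beta> n > l}.
        a n * ((1 - (1 - \<zeta> n) ^ \<tau> n) / \<zeta> n) * (\<zeta> n * \<beta> n - l))"

definition gapterm :: "nat \<Rightarrow> real \<Rightarrow> (nat \<Rightarrow> real) \<Rightarrow> (nat \<Rightarrow> real) \<Rightarrow> (nat \<Rightarrow> real)
   \<Rightarrow> (nat \<Rightarrow> real) \<Rightarrow> (nat \<Rightarrow> real) \<Rightarrow> (nat \<Rightarrow> nat) \<Rightarrow> (nat \<Rightarrow> nat) \<Rightarrow> real \<Rightarrow> real" where
  "gapterm N amax a p q \<zeta> \<beta> \<tau> D l =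
     (\<Sum>n\<in>{n. n < N \<and> \<zeta> n * \<beta> n > l}.
        atil amax (a n) (p n) (q n) * vfun (p n) (\<zeta> n) (\<beta> n) (\<tau> n) (D n) l
        - ((a n * p n - amax * p n * q n) * (1 - (1 - \<zeta> n) ^ \<tau> n))
            / ((p n - q n) * \<zeta> n) * (\<zeta> n * \<beta> n - l))"

end

theory Submission
  imports Defs
begin

text \<open>The two dual functions share the term \<open>\<lambda> B\<close> and the index set of their sums, so
  \<open>g\<^sub>I - g\<^sub>0\<close> is the gap sum at every \<open>\<lambda>\<close>. Evaluating the optimal values at the other
  problem's minimizer then sandwiches \<open>\<phi>\<^sub>I\<^sup>* - \<phi>\<^sub>0\<^sup>*\<close> between the gap sums at \<open>\<lambda>\<^sub>I\<^sup>*\<close> and \<open>\<lambda>\<^sub>0\<^sup>*\<close>.\<close>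

lemma minimum_diff_bounds:
  fixes f g :: "'a \<Rightarrow> real"
  assumes "S x\<^sub>f" "\<forall>y. S y \<longrightarrow> f x\<^sub>f \<le> f y"
    and "S x\<^sub>g" "\<forall>y. S y \<longrightarrow> g x\<^sub>g \<le> g y"
  shows "f x\<^sub>f - g x\<^sub>g \<le> f x\<^sub>g - g x\<^sub>g" and "f x\<^sub>f - g x\<^sub>f \<le> f x\<^sub>f - g x\<^sub>g"
  using assms by auto

lemma atil_summand_diff:
  fixes amax a p q s z t :: real
  assumes "q \<noteq> p"
  shows "(amax - atil amax a p q) * q * (s / z) * t - a * (s / z) * t
    = - ((a * p - amax * p * q) * s) / ((p - q) * z) * t"
proof -
  have coeff: "(amax - atil amax a p q) * q - a = - (a * p - amax * p * q) / (p - q)"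
    using assms unfolding atil_def by (simp add: field_simps)
  have "(amax - atil amax a p q) * q * (s / z) * t - a * (s / z) * t
      = ((amax - atil amax a p q) * q - a) * (s / z) * t"
    by (simp add: algebra_simps)
  also have "\<dots> = - ((a * p - amax * p * q) * s) / ((p - q) * z) * t"
    unfolding coeff by (simp add: field_split_simps)
  finally show ?thesis .
qed

lemma gI_minus_g0_eq_gapterm:
  assumes "\<And>n. n < N \<Longrightarrow> q n < p n"
  shows "gI N B amax a p q \<zeta> \<beta> \<tau> D l - g0 N B a \<zeta> \<beta> \<tau> l
    = gapterm N amax a p q \<zeta> \<beta> \<tau> D l"
proof -
  have "q n \<noteq> p n" if "n < N" for n
    using assms[OF that] by simp
  then have "x + ((amax - atil amax (a n) (p n) (q n)) * q n * (s n / \<zeta> n) * t n)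
        - a n * (s n / \<zeta> n) * t n
      = x - ((a n * p n - amax * p n * q n) * s n) / ((p n - q n) * \<zeta> n) * t n"
    if "n < N" for x n and s t :: "nat \<Rightarrow> real"
    using atil_summand_diff[of "q n" "p n" amax "a n" "s n" "\<zeta> n" "t n"] that by simp
  then show ?thesis
    unfolding gI_def g0_def gapterm_def add_diff_cancel_left sum_subtractf[symmetric]
    by (intro sum.cong refl) auto
qed

theorem theorem4:
  fixes N :: nat and B amax :: real
    and a p q \<zeta> \<beta> :: "nat \<Rightarrow> real" and \<tau> D :: "nat \<Rightarrow> nat"
    and lam0 lamI phiI phi0 :: real
  assumes "N \<ge> 1" and "B > 0" and "amax > 0"
    and "\<And>n. n < N \<Longrightarrow> a n \<ge> 0"
    and "\<And>n. n < N \<Longrightarrow> 0 < \<zeta> n \<and> \<zeta> n \<le> 1"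
    and "\<And>n. n < N \<Longrightarrow> \<beta> n \<ge> 0"
    and "\<And>n. n < N \<Longrightarrow> \<tau> n \<ge> 1"
    and "\<And>n. n < N \<Longrightarrow> D n \<ge> 1"
    and "\<And>n. n < N \<Longrightarrow> 0 \<le> q n \<and> q n < p n \<and> p n \<le> 1"
    and "\<And>n. n < N \<Longrightarrow> q n \<le> a n / amax \<and> a n / amax \<le> p n"
    and "lam0 \<ge> 0" and "\<forall>l\<ge>0. g0 N B a \<zeta> \<beta> \<tau> lam0 \<le> g0 N B a \<zeta> \<beta> \<tau> l"
    and "lamI \<ge> 0" and "\<forall>l\<ge>0. gI N B amax a p q \<zeta> \<beta> \<tau> D lamI \<le> gI N B amax a p q \<zeta> \<beta> \<tau> D l"
    and "phi0 = g0 N B a \<zeta> \<beta> \<tau> lam0"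
    and "phiI = gI N B amax a p q \<zeta> \<beta> \<tau> D lamI"
  shows "phiI - phi0 \<le> gapterm N amax a p q \<zeta> \<beta> \<tau> D lam0
    \<and> phiI - phi0 \<ge> gapterm N amax a p q \<zeta> \<beta> \<tau> D lamI"
proof -
  have gap: "gI N B amax a p q \<zeta> \<beta> \<tau> D l - g0 N B a \<zeta> \<beta> \<tau> l
      = gapterm N amax a p q \<zeta> \<beta> \<tau> D l" for l
    using assms(9) by (intro gI_minus_g0_eq_gapterm) blast
  note bounds = minimum_diff_bounds[where S = "\<lambda>l. l \<ge> 0",
      OF assms(13) _ assms(11), of "gI N B amax a p q \<zeta> \<beta> \<tau> D" "g0 N B a \<zeta> \<beta> \<tau>"]
  show ?thesis
    unfolding assms(15,16) using bounds assms(12,14) by (simp add: gap)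
qed

end
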